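(* Let $\sigma_0$ be a strictly positive random variable with $L(x):=1/\mathbb{P}(\sigma_0>x)$ slowly varying at infinity (i.e. $\lim_{u\to\infty}L(uv)/L(u)=1$ for every $v>0$), and let $Y=\{Y_n\}_{n\in\mathbb{N}}$ be i.i.d. with the law of $\sigma_0$. Let $h_t$ be any function with $h_t\to\infty$, $h_t^2=o(r_t)$, and such that, for all sufficiently large $t$, \[ L(\ell_t/h_t^3)>L(\ell_t)(1-1/h_t)\quad\text{and}\quad L(\ell_th_t^3)<L(\ell_t)(1+1/h_t).\] Then, as $t\to\infty$, \[ \mathbb{P}\Big(Y_{n_{\ell_t}}>\frac{th_t^2}{r_t}\Big)\to1.\]
   Context: $\ell_t:=\min\{s\ge0: sL(s)\ge t\}$ and $r_t:=L(\ell_t)$. For $n\ge0$, $M_n:=\max\{Y_i: i\le\lfloor n\rfloor\}$. For a level $l>0$, $n_l:=\min\{n\in\mathbb{N}: M_n>l\}$ is the index of the first exceedance of $l$. *)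

theory Defs
  imports "HOL-Probability.Probability" "HOL-Library.Landau_Symbols"
begin

definition tailL :: "'a measure \<Rightarrow> ('a \<Rightarrow> real) \<Rightarrow> real \<Rightarrow> real" where
  "tailL M \<sigma> x = 1 / measure M {\<omega> \<in> space M. \<sigma> \<omega> > x}"

definition slowly_varying :: "(real \<Rightarrow> real) \<Rightarrow> bool" where
  "slowly_varying L \<longleftrightarrow> (\<forall>v>0. ((\<lambda>u. L (u * v) / L u) \<longlongrightarrow> 1) at_top)"

definition ell :: "(real \<Rightarrow> real) \<Rightarrow> real \<Rightarrow> real" where
  "ell L t = Inf {s. s \<ge> 0 \<and> s * L s \<ge> t}"

definition rr :: "(real \<Rightarrow> real) \<Rightarrow> real \<Rightarrow> real" where
  "rr L t = L (ell L t)"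

definition maxY :: "(nat \<Rightarrow> 'a \<Rightarrow> real) \<Rightarrow> nat \<Rightarrow> 'a \<Rightarrow> real" where
  "maxY Y n \<omega> = Max ((\<lambda>i. Y i \<omega>) ` {..n})"

definition first_exc :: "(nat \<Rightarrow> 'a \<Rightarrow> real) \<Rightarrow> real \<Rightarrow> 'a \<Rightarrow> nat" where
  "first_exc Y l \<omega> = (LEAST n. maxY Y n \<omega> > l)"

end

theory Submission
  imports Defs
begin

text \<open>
  Write \<open>\<ell> = \<ell>\<^sub>t\<close> and \<open>k = h\<^sub>t\<close>. The value of the first observation above \<open>\<ell>\<close> is
  distributed as \<open>\<sigma>\<^sub>0\<close> conditioned on \<open>\<sigma>\<^sub>0 > \<ell>\<close>: summing the geometric series over the
  index of the first exceedance gives \<open>P(Y(n\<^sub>\<ell>) > x) \<ge> L(\<ell>) / L(x)\<close> for \<open>x \<ge> \<ell>\<close>. Since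
  \<open>\<ell> L(\<ell>) \<ge> t\<close>, the threshold \<open>t k\<^sup>2 / r\<^sub>t\<close> is at most \<open>x = \<ell> k\<^sup>2 \<le> \<ell> k\<^sup>3\<close>, so the
  hypothesis \<open>L(\<ell> k\<^sup>3) < L(\<ell>)(1 + 1/k)\<close> bounds the probability from below by
  \<open>1 / (1 + 1/k) \<rightarrow> 1\<close>.

  Slow variation is only used to make every tail probability positive.
\<close>

lemma slowly_varying_eventually_nonzero:
  assumes "slowly_varying L"
  shows "eventually (\<lambda>u. L u \<noteq> 0) at_top"
proof -
  have "((\<lambda>u. L (u * 1) / L u) \<longlongrightarrow> 1) at_top"
    using assms unfolding slowly_varying_def by (meson zero_less_one)
  then have "eventually (\<lambda>u. L (u * 1) / L u > 1 / 2) at_top"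
    by (rule order_tendstoD) simp
  then show ?thesis
    by eventually_elim auto
qed

lemma ell_nonneg:
  fixes L :: "real \<Rightarrow> real"
  assumes "\<And>s. 1 \<le> L s" and "0 < t"
  shows "0 \<le> ell L t"
  unfolding ell_def
  by (rule cInf_greatest) (use assms in \<open>auto intro!: exI[of _ t]\<close>)

text \<open>Right-continuity of \<open>L\<close> is what makes the infimum in \<open>\<ell>\<^sub>t\<close> a minimum.\<close>

lemma ell_mult_ge:
  fixes L :: "real \<Rightarrow> real"
  assumes mono: "mono L" and ge1: "\<And>s. 1 \<le> L s" and "0 < t"
    and cont: "continuous (at_right (ell L t)) L"
  shows "t \<le> ell L t * L (ell L t)"
proof -
  define S where "S = {s. s \<ge> 0 \<and> s * L s \<ge> t}"
  have "t \<in> S"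
    using ge1[of t] \<open>0 < t\<close> by (simp add: S_def)
  have bdd: "bdd_below S"
    by (rule bdd_belowI[of _ 0]) (simp add: S_def)
  have ell_S: "ell L t = Inf S"
    by (simp add: ell_def S_def)
  have "eventually (\<lambda>s. t \<le> s * L s) (at_right (ell L t))"
    using eventually_at_right_less
  proof eventually_elim
    case (elim s)
    then obtain s' where "s' \<in> S" "s' < s"
      using cInf_lessD[of S s] \<open>t \<in> S\<close> ell_S by auto
    then have "t \<le> s' * L s'"
      by (simp add: S_def)
    also have "\<dots> \<le> s * L s"
      using \<open>s' \<in> S\<close> \<open>s' < s\<close> ge1[of s'] monoD[OF mono, of s' s]
      by (intro mult_mono) (auto simp: S_def)
    finally show ?case .
  qed
  moreover have "((\<lambda>s. s * L s) \<longlongrightarrow> ell L t * L (ell L t)) (at_right (ell L t))"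
    using cont unfolding continuous_within
    by (intro tendsto_mult) auto
  ultimately show ?thesis
    by (intro tendsto_lowerbound) auto
qed

context prob_space
begin

lemma prob_tail_pos_if_slowly_varying:
  assumes [measurable]: "\<sigma> \<in> borel_measurable M" and "slowly_varying (tailL M \<sigma>)"
  shows "0 < prob {\<omega> \<in> space M. x < \<sigma> \<omega>}"
proof -
  have "eventually (\<lambda>u. tailL M \<sigma> u \<noteq> 0 \<and> x \<le> u) at_top"
    using slowly_varying_eventually_nonzero[OF assms(2)] eventually_ge_at_top
    by (rule eventually_conj)
  then obtain u where "tailL M \<sigma> u \<noteq> 0" "x \<le> u"
    using eventually_happens'[OF trivial_limit_at_top_linorder] by blast
  then have "0 < prob {\<omega> \<in> space M. u < \<sigma> \<omega>}"
    by (simp add: tailL_def zero_less_measure_iff)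
  also have "\<dots> \<le> prob {\<omega> \<in> space M. x < \<sigma> \<omega>}"
    using \<open>x \<le> u\<close> by (intro finite_measure_mono) auto
  finally show ?thesis .
qed

lemma tailL_ge_1:
  assumes "0 < prob {\<omega> \<in> space M. x < \<sigma> \<omega>}"
  shows "1 \<le> tailL M \<sigma> x"
  using assms by (simp add: tailL_def)

lemma tailL_mono:
  assumes [measurable]: "\<sigma> \<in> borel_measurable M"
    and pos: "\<And>x. 0 < prob {\<omega> \<in> space M. x < \<sigma> \<omega>}"
  shows "mono (tailL M \<sigma>)"
proof
  fix x y :: real assume "x \<le> y"
  then have "prob {\<omega> \<in> space M. y < \<sigma> \<omega>} \<le> prob {\<omega> \<in> space M. x < \<sigma> \<omega>}"
    by (intro finite_measure_mono) auto
  then show "tailL M \<sigma> x \<le> tailL M \<sigma> y"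
    unfolding tailL_def using pos by (simp add: frac_le)
qed

lemma prob_tail_eq_1_minus_cdf:
  assumes [measurable]: "\<sigma> \<in> borel_measurable M"
  shows "prob {\<omega> \<in> space M. x < \<sigma> \<omega>} = 1 - cdf (distr M borel \<sigma>) x"
proof -
  have "cdf (distr M borel \<sigma>) x = prob (\<sigma> -` {..x} \<inter> space M)"
    by (simp add: cdf_def measure_distr)
  also have "\<sigma> -` {..x} \<inter> space M = space M - {\<omega> \<in> space M. x < \<sigma> \<omega>}"
    by auto
  finally show ?thesis
    by (simp add: prob_compl)
qed

lemma tailL_continuous_at_right:
  assumes [measurable]: "\<sigma> \<in> borel_measurable M"
    and "0 < prob {\<omega> \<in> space M. x < \<sigma> \<omega>}"
  shows "continuous (at_right x) (tailL M \<sigma>)"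
proof -
  have "tailL M \<sigma> = (\<lambda>y. 1 / (1 - cdf (distr M borel \<sigma>) y))"
    by (simp add: tailL_def prob_tail_eq_1_minus_cdf fun_eq_iff)
  moreover have "continuous (at_right x) (cdf (distr M borel \<sigma>))"
    using real_distribution.finite_borel_measure_M[OF real_distribution_distr[OF assms(1)]]
    by (rule finite_borel_measure.cdf_is_right_cont)
  ultimately show ?thesis
    using assms(2)
    by (simp add: continuous_at_within_divide continuous_diff prob_tail_eq_1_minus_cdf)
qed

end

lemma first_exc_eqI:
  assumes "\<forall>i<n. Y i \<omega> \<le> l" and "l < Y n \<omega>"
  shows "first_exc Y l \<omega> = n"
  unfolding first_exc_def
proof (rule Least_equality)
  show "l < maxY Y n \<omega>"
    unfolding maxY_def using assms(2) by (subst Max_gr_iff) auto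
next
  fix m assume "l < maxY Y m \<omega>"
  then obtain i where "i \<le> m" "l < Y i \<omega>"
    unfolding maxY_def by (subst (asm) Max_gr_iff) auto
  then show "n \<le> m"
    using assms(1) by (meson leI less_le_trans not_le)
qed

locale iid_sequence = prob_space +
  fixes \<sigma> :: "'a \<Rightarrow> real" and Y :: "nat \<Rightarrow> 'a \<Rightarrow> real"
  assumes random_variable_\<sigma> [measurable]: "\<sigma> \<in> borel_measurable M"
    and random_variable_Y [measurable]: "\<And>n. Y n \<in> borel_measurable M"
    and indep_Y: "indep_vars (\<lambda>_. borel) Y UNIV"
    and distr_Y: "\<And>n. distr M borel (Y n) = distr M borel \<sigma>"
begin

lemma measurable_first_exc [measurable]: "first_exc Y l \<in> measurable M (count_space UNIV)"
proof -
  have [measurable]: "maxY Y n \<in> borel_measurable M" for n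
    unfolding maxY_def by measurable
  show ?thesis
    unfolding first_exc_def by measurable
qed

lemma borel_measurable_value_at_first_exc [measurable]: "(\<lambda>\<omega>. Y (first_exc Y l \<omega>) \<omega>) \<in> borel_measurable M"
  by (rule measurable_compose_countable) measurable

lemma prob_Y_vimage:
  assumes "B \<in> sets borel"
  shows "prob (Y n -` B \<inter> space M) = prob (\<sigma> -` B \<inter> space M)"
  using assms measure_distr[of "Y n" M borel B] measure_distr[of \<sigma> M borel B]
  by (simp add: distr_Y)

lemma prob_first_exceedance_at_index:
  "prob {\<omega> \<in> space M. (\<forall>i<n. Y i \<omega> \<le> l) \<and> x < Y n \<omega>}
     = (1 - prob {\<omega> \<in> space M. l < \<sigma> \<omega>}) ^ n * prob {\<omega> \<in> space M. x < \<sigma> \<omega>}"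
proof -
  define A where "A i = (if i < n then {..l} else {x<..})" for i
  have "{\<omega> \<in> space M. (\<forall>i<n. Y i \<omega> \<le> l) \<and> x < Y n \<omega>} = (\<Inter>i\<le>n. Y i -` A i \<inter> space M)"
  proof (intro set_eqI iffI)
    fix \<omega> assume \<omega>: "\<omega> \<in> (\<Inter>i\<le>n. Y i -` A i \<inter> space M)"
    then have mem: "Y i \<omega> \<in> A i" if "i \<le> n" for i
      using that by auto
    have "Y i \<omega> \<le> l" if "i < n" for i
      using mem[of i] that unfolding A_def by auto
    moreover have "x < Y n \<omega>"
      using mem[of n] unfolding A_def by auto
    ultimately show "\<omega> \<in> {\<omega> \<in> space M. (\<forall>i<n. Y i \<omega> \<le> l) \<and> x < Y n \<omega>}"
      using \<omega> by auto
  qed (auto simp: A_def not_less)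
  then have "prob {\<omega> \<in> space M. (\<forall>i<n. Y i \<omega> \<le> l) \<and> x < Y n \<omega>}
      = prob (\<Inter>i\<le>n. Y i -` A i \<inter> space M)"
    by simp
  also have "\<dots> = (\<Prod>i\<le>n. prob (Y i -` A i \<inter> space M))"
    by (rule indep_varsD[OF indep_Y]) (auto simp: A_def)
  also have "\<dots> = (\<Prod>i\<le>n. prob (\<sigma> -` A i \<inter> space M))"
    by (rule prod.cong) (auto simp: A_def intro!: prob_Y_vimage)
  also have "\<dots> = (\<Prod>i<n. prob (\<sigma> -` {..l} \<inter> space M)) * prob (\<sigma> -` {x<..} \<inter> space M)"
    unfolding lessThan_Suc_atMost[symmetric] prod.lessThan_Suc by (simp add: A_def)
  also have "\<dots> = prob (\<sigma> -` {..l} \<inter> space M) ^ n * prob (\<sigma> -` {x<..} \<inter> space M)"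
    by simp
  also have "prob (\<sigma> -` {..l} \<inter> space M) = 1 - prob {\<omega> \<in> space M. l < \<sigma> \<omega>}"
  proof -
    have "\<sigma> -` {..l} \<inter> space M = space M - {\<omega> \<in> space M. l < \<sigma> \<omega>}"
      by auto
    then show ?thesis
      by (simp add: prob_compl)
  qed
  also have "\<sigma> -` {x<..} \<inter> space M = {\<omega> \<in> space M. x < \<sigma> \<omega>}"
    by auto
  finally show ?thesis .
qed

lemma prob_value_at_first_exc_ge:
  assumes "l \<le> x" and "c \<le> x" and pos: "0 < prob {\<omega> \<in> space M. l < \<sigma> \<omega>}"
  shows "prob {\<omega> \<in> space M. x < \<sigma> \<omega>} / prob {\<omega> \<in> space M. l < \<sigma> \<omega>}
    \<le> prob {\<omega> \<in> space M. c < Y (first_exc Y l \<omega>) \<omega>}"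
proof -
  define p where "p = prob {\<omega> \<in> space M. l < \<sigma> \<omega>}"
  define q where "q = prob {\<omega> \<in> space M. x < \<sigma> \<omega>}"
  define D where "D n = {\<omega> \<in> space M. (\<forall>i<n. Y i \<omega> \<le> l) \<and> x < Y n \<omega>}" for n
  have disjoint: "D m \<inter> D n = {}" if "m < n" for m n
  proof (intro equals0I)
    fix \<omega> assume "\<omega> \<in> D m \<inter> D n"
    then have "x < Y m \<omega>" "Y m \<omega> \<le> l"
      using \<open>m < n\<close> by (auto simp: D_def)
    then show False
      using \<open>l \<le> x\<close> by linarith
  qed
  have "disjoint_family D"
    unfolding disjoint_family_on_def
  proof (intro ballI impI)
    fix m n :: nat assume "m \<noteq> n"
    then show "D m \<inter> D n = {}"
      using disjoint[of m n] disjoint[of n m] by (metis Int_commute linorder_neqE_nat)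
  qed
  moreover have "range D \<subseteq> events"
    by (auto simp: D_def)
  ultimately have "(\<lambda>n. prob (D n)) sums prob (\<Union>n. D n)"
    by (intro finite_measure_UNION)
  moreover have "(\<lambda>n. prob (D n)) = (\<lambda>n. (1 - p) ^ n * q)"
    by (simp add: D_def p_def q_def prob_first_exceedance_at_index)
  moreover have "(\<lambda>n. (1 - p) ^ n * q) sums (1 / (1 - (1 - p)) * q)"
    using pos prob_le_1 by (intro sums_mult2 geometric_sums) (auto simp: p_def)
  ultimately have prob_union: "prob (\<Union>n. D n) = q / p"
    by (simp add: sums_unique2)
  have "(\<Union>n. D n) \<subseteq> {\<omega> \<in> space M. c < Y (first_exc Y l \<omega>) \<omega>}"
    using \<open>l \<le> x\<close> \<open>c \<le> x\<close> by (auto simp: D_def first_exc_eqI)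
  then have "prob (\<Union>n. D n) \<le> prob {\<omega> \<in> space M. c < Y (first_exc Y l \<omega>) \<omega>}"
    by (intro finite_measure_mono) measurable
  then show ?thesis
    by (simp add: prob_union p_def q_def)
qed

end

locale iid_slowly_varying_tail = iid_sequence +
  assumes slowly_varying_tail: "slowly_varying (tailL M \<sigma>)"
begin

lemma prob_tail_pos: "0 < prob {\<omega> \<in> space M. x < \<sigma> \<omega>}"
  using random_variable_\<sigma> slowly_varying_tail by (rule prob_tail_pos_if_slowly_varying)

lemma tailL_pos: "0 < tailL M \<sigma> x"
  using zero_less_one tailL_ge_1[OF prob_tail_pos] by (rule less_le_trans)

lemma mono_tailL: "mono (tailL M \<sigma>)"
  using random_variable_\<sigma> prob_tail_pos by (rule tailL_mono)

lemma ell_tailL_nonneg: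
  assumes "0 < t"
  shows "0 \<le> ell (tailL M \<sigma>) t"
  using tailL_ge_1[OF prob_tail_pos] assms by (rule ell_nonneg)

lemma ell_mult_tailL_ge:
  assumes "0 < t"
  shows "t \<le> ell (tailL M \<sigma>) t * tailL M \<sigma> (ell (tailL M \<sigma>) t)"
  using mono_tailL tailL_ge_1[OF prob_tail_pos] assms
    tailL_continuous_at_right[OF random_variable_\<sigma> prob_tail_pos]
  by (rule ell_mult_ge)

lemma prob_value_at_first_exc_ell_ge:
  assumes "0 < t" and "1 \<le> k"
  defines "L \<equiv> tailL M \<sigma>"
  shows "L (ell L t) / L (ell L t * k\<^sup>2)
    \<le> prob {\<omega> \<in> space M. t * k\<^sup>2 / rr L t < Y (first_exc Y (ell L t) \<omega>) \<omega>}"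
proof -
  let ?l = "ell L t"
  have "t * k\<^sup>2 / rr L t \<le> ?l * k\<^sup>2"
    using tailL_pos[of ?l] mult_right_mono[OF ell_mult_tailL_ge[OF \<open>0 < t\<close>], of "k\<^sup>2"]
    by (simp add: L_def rr_def divide_le_eq mult_ac)
  moreover have "?l \<le> ?l * k\<^sup>2"
    using ell_tailL_nonneg[OF \<open>0 < t\<close>] \<open>1 \<le> k\<close>
    by (simp add: L_def mult_le_cancel_left1)
  ultimately have "prob {\<omega> \<in> space M. ?l * k\<^sup>2 < \<sigma> \<omega>} / prob {\<omega> \<in> space M. ?l < \<sigma> \<omega>}
      \<le> prob {\<omega> \<in> space M. t * k\<^sup>2 / rr L t < Y (first_exc Y ?l \<omega>) \<omega>}"
    using prob_tail_pos by (intro prob_value_at_first_exc_ge)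
  then show ?thesis
    using prob_tail_pos by (simp add: L_def tailL_def)
qed


lemma prob_value_at_first_exc_ell_ge_of_tail_bound:
  assumes "0 < t" and "1 \<le> k" and "0 \<le> e"
  defines "L \<equiv> tailL M \<sigma>"
  assumes bound: "L (ell L t * k ^ 3) < L (ell L t) * (1 + e)"
  shows "1 / (1 + e)
    \<le> prob {\<omega> \<in> space M. t * k\<^sup>2 / rr L t < Y (first_exc Y (ell L t) \<omega>) \<omega>}"
proof -
  let ?l = "ell L t"
  have "1 / (1 + e) = L ?l / (L ?l * (1 + e))"
    using tailL_pos[of ?l] \<open>0 \<le> e\<close> by (simp add: L_def)
  also have "\<dots> \<le> L ?l / L (?l * k ^ 3)"
    using bound \<open>0 \<le> e\<close> tailL_pos[of ?l, THEN less_imp_le] tailL_pos[of "?l * k ^ 3"]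
    by (intro divide_left_mono) (auto simp: L_def)
  also have "\<dots> \<le> L ?l / L (?l * k\<^sup>2)"
    using \<open>1 \<le> k\<close> tailL_pos[of ?l, THEN less_imp_le] tailL_pos ell_tailL_nonneg[OF \<open>0 < t\<close>]
    by (intro divide_left_mono monoD[OF mono_tailL[folded L_def]] mult_left_mono power_increasing)
      (auto simp: L_def)
  also have "\<dots> \<le> prob {\<omega> \<in> space M. t * k\<^sup>2 / rr L t < Y (first_exc Y ?l \<omega>) \<omega>}"
    unfolding L_def using \<open>0 < t\<close> \<open>1 \<le> k\<close> by (rule prob_value_at_first_exc_ell_ge)
  finally show ?thesis .
qed
end

theorem proposition3p7:
  fixes M :: "'a measure" and \<sigma>0 :: "'a \<Rightarrow> real" and Y :: "nat \<Rightarrow> 'a \<Rightarrow> real"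
    and h :: "real \<Rightarrow> real"
  assumes "prob_space M"
    and "\<sigma>0 \<in> borel_measurable M"
    and "AE \<omega> in M. \<sigma>0 \<omega> > 0"
    and "slowly_varying (tailL M \<sigma>0)"
    and "\<And>n. Y n \<in> borel_measurable M"
    and "prob_space.indep_vars M (\<lambda>_. borel) Y UNIV"
    and "\<And>n. distr M borel (Y n) = distr M borel \<sigma>0"
    and "filterlim h at_top at_top"
    and "(\<lambda>t. (h t)\<^sup>2) \<in> o(\<lambda>t. rr (tailL M \<sigma>0) t)"
    and "eventually (\<lambda>t.
            tailL M \<sigma>0 (ell (tailL M \<sigma>0) t / (h t)^3)
              > tailL M \<sigma>0 (ell (tailL M \<sigma>0) t) * (1 - 1 / h t)
          \<and> tailL M \<sigma>0 (ell (tailL M \<sigma>0) t * (h t)^3)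
              < tailL M \<sigma>0 (ell (tailL M \<sigma>0) t) * (1 + 1 / h t)) at_top"
  shows "((\<lambda>t. measure M {\<omega> \<in> space M.
            Y (first_exc Y (ell (tailL M \<sigma>0) t) \<omega>) \<omega>
              > t * (h t)\<^sup>2 / rr (tailL M \<sigma>0) t}) \<longlongrightarrow> 1) at_top"
proof -
  interpret iid_slowly_varying_tail M \<sigma>0 Y
    using assms(1,2,4-7)
    by (simp add: iid_slowly_varying_tail_def iid_slowly_varying_tail_axioms_def
        iid_sequence_def iid_sequence_axioms_def)
  define E where "E t = {\<omega> \<in> space M.
    t * (h t)\<^sup>2 / rr (tailL M \<sigma>0) t < Y (first_exc Y (ell (tailL M \<sigma>0) t) \<omega>) \<omega>}" for t
  have "eventually (\<lambda>t. 1 \<le> h t) at_top"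
    using assms(8) by (simp add: filterlim_at_top)
  then have "eventually (\<lambda>t. 1 / (1 + 1 / h t) \<le> prob (E t)) at_top"
    using assms(10) eventually_gt_at_top[of 0]
  proof eventually_elim
    case (elim t)
    then show ?case
      unfolding E_def by (intro prob_value_at_first_exc_ell_ge_of_tail_bound) auto
  qed
  moreover have "eventually (\<lambda>t. prob (E t) \<le> 1) at_top"
    by (intro always_eventually allI prob_le_1)
  moreover have "((\<lambda>t. 1 / (1 + 1 / h t)) \<longlongrightarrow> 1) at_top"
  proof -
    have "((\<lambda>t. 1 / (1 + inverse (h t))) \<longlongrightarrow> 1 / (1 + 0)) at_top"
      by (intro tendsto_divide tendsto_add tendsto_const tendsto_inverse_0_at_top[OF assms(8)]) simp
    then show ?thesis
      by (simp add: inverse_eq_divide)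
  qed
  ultimately have "((\<lambda>t. prob (E t)) \<longlongrightarrow> 1) at_top"
    using tendsto_const by (rule tendsto_sandwich)
  then show ?thesis
    by (simp add: E_def)
qed

end
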